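(* Let $F$ be an algebraically closed field of characteristic different from $2$ and $3$, and let $K_{10}$ be the Kac Jordan superalgebra over $F$ with basis and multiplication as described in the context. Then every maximal subalgebra of $K_{10}$ is, up to an automorphism of $K_{10}$, one of the following: (i) $(K_{10})_{\bar 0}$; (ii) the subalgebra with basis $\{e,f,a,p_1,p_2\}$; (iii) the subalgebra with basis $\{e,f,a+b,c_1,p_1,q_1,p_2+q_2\}$; (iv) the subalgebra with basis $\{e,f,a,b,c_1,p_1,q_1\}$.
   Context: $K_{10}=J_{\bar 0}\oplus J_{\bar 1}$ has even part $J_{\bar 0}$ with basis $e,a,b,c_1,c_2,f$ and odd part $J_{\bar 1}$ with basis $p_1,p_2,q_1,q_2$. The product is supercommutative ($uv=(-1)^{\bar u\bar v}vu$ for homogeneous $u,v$) and determined by the following products (all products of basis elements not listed, up to supercommutativity, are $0$): $e^2=e$, $ea=a$, $eb=b$, $ec_i=c_i$, $ef=0$, $ep_i=\tfrac12p_i$, $eq_i=\tfrac12 q_i$; $f^2=f$, $fp_i=\tfrac12p_i$, $fq_i=\tfrac12 q_i$ ($f$ annihilates $e,a,b,c_1,c_2$); $a^2=4e$, $ap_i=p_i$, $aq_i=-q_i$; $b^2=-4e$, $bp_i=q_i$, $bq_i=-p_i$; $c_1c_2=2e$, $c_1^2=c_2^2=0$, $c_1p_2=q_1$, $c_1q_2=p_1$, $c_1p_1=c_1q_1=0$, $c_2p_1=q_2$, $c_2q_1=p_2$, $c_2p_2=c_2q_2=0$; $a,b,c_1,c_2$ are pairwise orthogonal in the sense that $ab=ac_i=bc_i=0$;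 $p_1p_2=a+2(e-3f)$, $p_1q_1=2c_1$, $p_1q_2=b$, $p_2q_1=-b$, $p_2q_2=-2c_2$, $q_1q_2=a-2(e-3f)$, and $p_i^2=q_i^2=0$ (odd–odd products are skew-symmetric, e.g. $p_2p_1=-p_1p_2$). This is a simple Jordan superalgebra. Subalgebras are understood in the graded sense (spanned by homogeneous elements); a maximal subalgebra is a proper subalgebra not properly contained in any proper subalgebra. Automorphisms are grading-preserving algebra automorphisms. *)

theory Defs
  imports Main "HOL-Computational_Algebra.Polynomial"
begin

definition alg_closed :: "'a::field itself \<Rightarrow> bool" where
  "alg_closed _ \<longleftrightarrow> (\<forall>p :: 'a poly. degree p > 0 \<longrightarrow> (\<exists>x. poly p x = 0))"

datatype kb = E | A | B | C1 | C2 | F | P1 | P2 | Q1 | Q2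

instance kb :: finite
proof
  have "UNIV = set [E, A, B, C1, C2, F, P1, P2, Q1, Q2]"
    by (auto intro: kb.exhaust)
  then show "finite (UNIV :: kb set)" by (metis List.finite_set)
qed

fun kodd :: "kb \<Rightarrow> bool" where
  "kodd P1 = True" | "kodd P2 = True" | "kodd Q1 = True" | "kodd Q2 = True"
| "kodd _ = False"

type_synonym 'a k10 = "kb \<Rightarrow> 'a"

definition kadd :: "'a::field k10 \<Rightarrow> 'a k10 \<Rightarrow> 'a k10" where
  "kadd u v = (\<lambda>i. u i + v i)"

definition ksmul :: "'a::field \<Rightarrow> 'a k10 \<Rightarrow> 'a k10" where
  "ksmul c v = (\<lambda>i. c * v i)"

definition kzero :: "'a::field k10" where
  "kzero = (\<lambda>i. 0)"

definition bv :: "kb \<Rightarrow> 'a::field k10" where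
  "bv k = (\<lambda>i. if i = k then 1 else 0)"

text \<open>Listed products of basis elements (one order per unordered pair).\<close>
fun bp0 :: "kb \<Rightarrow> kb \<Rightarrow> 'a::field k10" where
  "bp0 E E = bv E"
| "bp0 E A = bv A"
| "bp0 E B = bv B"
| "bp0 E C1 = bv C1"
| "bp0 E C2 = bv C2"
| "bp0 E P1 = ksmul (1/2) (bv P1)"
| "bp0 E P2 = ksmul (1/2) (bv P2)"
| "bp0 E Q1 = ksmul (1/2) (bv Q1)"
| "bp0 E Q2 = ksmul (1/2) (bv Q2)"
| "bp0 F F = bv F"
| "bp0 F P1 = ksmul (1/2) (bv P1)"
| "bp0 F P2 = ksmul (1/2) (bv P2)"
| "bp0 F Q1 = ksmul (1/2) (bv Q1)"
| "bp0 F Q2 = ksmul (1/2) (bv Q2)"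
| "bp0 A A = ksmul 4 (bv E)"
| "bp0 A P1 = bv P1"
| "bp0 A P2 = bv P2"
| "bp0 A Q1 = ksmul (-1) (bv Q1)"
| "bp0 A Q2 = ksmul (-1) (bv Q2)"
| "bp0 B B = ksmul (-4) (bv E)"
| "bp0 B P1 = bv Q1"
| "bp0 B P2 = bv Q2"
| "bp0 B Q1 = ksmul (-1) (bv P1)"
| "bp0 B Q2 = ksmul (-1) (bv P2)"
| "bp0 C1 C2 = ksmul 2 (bv E)"
| "bp0 C1 P2 = bv Q1"
| "bp0 C1 Q2 = bv P1"
| "bp0 C2 P1 = bv Q2"
| "bp0 C2 Q1 = bv P2"
| "bp0 P1 P2 = kadd (bv A) (kadd (ksmul 2 (bv E)) (ksmul (-6) (bv F)))"
| "bp0 P1 Q1 = ksmul 2 (bv C1)"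
| "bp0 P1 Q2 = bv B"
| "bp0 P2 Q1 = ksmul (-1) (bv B)"
| "bp0 P2 Q2 = ksmul (-2) (bv C2)"
| "bp0 Q1 Q2 = kadd (bv A) (kadd (ksmul (-2) (bv E)) (ksmul 6 (bv F)))"
| "bp0 _ _ = kzero"

text \<open>Full product of basis elements, extended by supercommutativity
  (uv = (-1)^{|u||v|} vu).\<close>
definition bp :: "kb \<Rightarrow> kb \<Rightarrow> 'a::field k10" where
  "bp x y = (if x = y then bp0 x x
             else kadd (bp0 x y) (ksmul (if kodd x \<and> kodd y then -1 else 1) (bp0 y x)))"

definition kmult :: "'a::field k10 \<Rightarrow> 'a k10 \<Rightarrow> 'a k10" where
  "kmult u v = (\<lambda>k. \<Sum>i\<in>UNIV. \<Sum>j\<in>UNIV. u i * v j * bp i j k)"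

definition even_part :: "'a::field k10 \<Rightarrow> 'a k10" where
  "even_part x = (\<lambda>i. if kodd i then 0 else x i)"

definition odd_part :: "'a::field k10 \<Rightarrow> 'a k10" where
  "odd_part x = (\<lambda>i. if kodd i then x i else 0)"

text \<open>Graded subalgebra: a subspace closed under the product and spanned by
  homogeneous elements (equivalently, closed under the homogeneous projections).\<close>
definition is_subalg :: "'a::field k10 set \<Rightarrow> bool" where
  "is_subalg S \<longleftrightarrow> kzero \<in> S
     \<and> (\<forall>x\<in>S. \<forall>y\<in>S. kadd x y \<in> S)
     \<and> (\<forall>c. \<forall>x\<in>S. ksmul c x \<in> S)
     \<and> (\<forall>x\<in>S. \<forall>y\<in>S. kmult x y \<in> S)
     \<and> (\<forall>x\<in>S. even_part x \<in> S \<and> odd_part x \<in> S)"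

definition is_maximal_subalg :: "'a::field k10 set \<Rightarrow> bool" where
  "is_maximal_subalg S \<longleftrightarrow> is_subalg S \<and> S \<noteq> UNIV
     \<and> (\<forall>T. is_subalg T \<and> S \<subseteq> T \<and> T \<noteq> UNIV \<longrightarrow> T = S)"

definition is_aut :: "('a::field k10 \<Rightarrow> 'a k10) \<Rightarrow> bool" where
  "is_aut \<phi> \<longleftrightarrow> bij \<phi>
     \<and> (\<forall>x y. \<phi> (kadd x y) = kadd (\<phi> x) (\<phi> y))
     \<and> (\<forall>c x. \<phi> (ksmul c x) = ksmul c (\<phi> x))
     \<and> (\<forall>x y. \<phi> (kmult x y) = kmult (\<phi> x) (\<phi> y))
     \<and> (\<forall>x. even_part x = x \<longrightarrow> even_part (\<phi> x) = \<phi> x)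
     \<and> (\<forall>x. odd_part x = x \<longrightarrow> odd_part (\<phi> x) = \<phi> x)"

definition kspan :: "'a::field k10 list \<Rightarrow> 'a k10 set" where
  "kspan vs = {foldr kadd (map2 ksmul cs vs) kzero | cs. length cs = length vs}"

definition M1 :: "'a::field k10 set" where
  "M1 = kspan [bv E, bv A, bv B, bv C1, bv C2, bv F]"

definition M2 :: "'a::field k10 set" where
  "M2 = kspan [bv E, bv F, bv A, bv P1, bv P2]"

definition M3 :: "'a::field k10 set" where
  "M3 = kspan [bv E, bv F, kadd (bv A) (bv B), bv C1, bv P1, bv Q1, kadd (bv P2) (bv Q2)]"

definition M4 :: "'a::field k10 set" where
  "M4 = kspan [bv E, bv F, bv A, bv B, bv C1, bv P1, bv Q1]"

end

theory Submission
  imports Defs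
begin

text \<open>The odd part of \<open>K\<^sub>1\<^sub>0\<close> is the sum of \<open>X = span {p\<^sub>1 + q\<^sub>1, p\<^sub>2 - q\<^sub>2}\<close> and
  \<open>Y = span {p\<^sub>1 - q\<^sub>1, p\<^sub>2 + q\<^sub>2}\<close>. Explicit transvections act on \<open>X\<close> as \<open>SL\<^sub>2\<close> while fixing
  \<open>Y\<close>, and an involution exchanges \<open>X\<close> and \<open>Y\<close>. So a proper subalgebra either has zero odd
  part, or after an automorphism it contains \<open>p\<^sub>1\<close> (if some odd element has nonzero \<open>X\<close>- and
  \<open>Y\<close>-components) or \<open>p\<^sub>1 - q\<^sub>1\<close> (otherwise). As \<open>p\<^sub>1, p\<^sub>2, q\<^sub>1\<close> generate \<open>K\<^sub>1\<^sub>0\<close>, a short case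
  analysis on the odd coordinates then puts the subalgebra, up to an automorphism, inside one
  of the four listed ones, with equality when it is maximal.\<close>

lemma of_nat_ne_zero_if_char:
  assumes "CHAR('a::semiring_1) \<noteq> n" and "\<And>d. d dvd n \<Longrightarrow> d = 1 \<or> d = n"
  shows "(of_nat n :: 'a) \<noteq> 0"
  using assms CHAR_not_1 of_nat_eq_0_iff_char_dvd by (metis One_nat_def)

lemma two_ne_zero_if_char: "CHAR('a::semiring_1) \<noteq> 2 \<Longrightarrow> (2::'a) \<noteq> 0"
proof -
  have "d = 1 \<or> d = 2" if "d dvd 2" for d :: nat
    using that dvd_imp_le[OF that] by (cases "d = 0") auto
  then show "CHAR('a) \<noteq> 2 \<Longrightarrow> (2::'a) \<noteq> 0" using of_nat_ne_zero_if_char[of 2] by simp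
qed

lemma three_ne_zero_if_char: "CHAR('a::semiring_1) \<noteq> 3 \<Longrightarrow> (3::'a) \<noteq> 0"
proof -
  have "d = 1 \<or> d = 3" if "d dvd 3" for d :: nat
  proof -
    have "0 < d" using that by (cases "d = 0") auto
    moreover have "d \<le> 3" using that by (rule dvd_imp_le) simp
    moreover have "d \<noteq> 2" using that by (auto simp: even_numeral)
    ultimately show ?thesis by linarith
  qed
  then show "CHAR('a) \<noteq> 3 \<Longrightarrow> (3::'a) \<noteq> 0" using of_nat_ne_zero_if_char[of 3] by simp
qed

definition kvec :: "'a \<Rightarrow> 'a \<Rightarrow> 'a \<Rightarrow> 'a \<Rightarrow> 'a \<Rightarrow> 'a \<Rightarrow> 'a \<Rightarrow> 'a \<Rightarrow> 'a \<Rightarrow> 'a \<Rightarrow> 'a k10" where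
  "kvec e a b c1 c2 f p1 p2 q1 q2 = (\<lambda>k. case k of E \<Rightarrow> e | A \<Rightarrow> a | B \<Rightarrow> b | C1 \<Rightarrow> c1 | C2 \<Rightarrow> c2
     | F \<Rightarrow> f | P1 \<Rightarrow> p1 | P2 \<Rightarrow> p2 | Q1 \<Rightarrow> q1 | Q2 \<Rightarrow> q2)"

lemma kvec_apply [simp]:
  "kvec e a b c1 c2 f p1 p2 q1 q2 E = e" "kvec e a b c1 c2 f p1 p2 q1 q2 A = a"
  "kvec e a b c1 c2 f p1 p2 q1 q2 B = b" "kvec e a b c1 c2 f p1 p2 q1 q2 C1 = c1"
  "kvec e a b c1 c2 f p1 p2 q1 q2 C2 = c2" "kvec e a b c1 c2 f p1 p2 q1 q2 F = f"
  "kvec e a b c1 c2 f p1 p2 q1 q2 P1 = p1" "kvec e a b c1 c2 f p1 p2 q1 q2 P2 = p2"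
  "kvec e a b c1 c2 f p1 p2 q1 q2 Q1 = q1" "kvec e a b c1 c2 f p1 p2 q1 q2 Q2 = q2"
  by (simp_all add: kvec_def)

lemma k10_eq_iff:
  "x = y \<longleftrightarrow> x E = y E \<and> x A = y A \<and> x B = y B \<and> x C1 = y C1 \<and> x C2 = y C2 \<and> x F = y F
     \<and> x P1 = y P1 \<and> x P2 = y P2 \<and> x Q1 = y Q1 \<and> x Q2 = y Q2"
  for x y :: "kb \<Rightarrow> 'a"
proof
  assume h: "x E = y E \<and> x A = y A \<and> x B = y B \<and> x C1 = y C1 \<and> x C2 = y C2 \<and> x F = y F
     \<and> x P1 = y P1 \<and> x P2 = y P2 \<and> x Q1 = y Q1 \<and> x Q2 = y Q2"
  show "x = y"
  proof (rule ext)
    show "x k = y k" for k using h by (cases k) simp_all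
  qed
qed simp

lemma kadd_apply [simp]: "kadd x y k = x k + y k"
  and ksmul_apply [simp]: "ksmul c x k = c * x k"
  and kzero_apply [simp]: "kzero k = 0"
  and bv_apply [simp]: "bv k j = (if j = k then 1 else 0)"
  and even_part_apply [simp]: "even_part x k = (if kodd k then 0 else x k)"
  and odd_part_apply [simp]: "odd_part x k = (if kodd k then x k else 0)"
  by (simp_all add: kadd_def ksmul_def kzero_def bv_def even_part_def odd_part_def)

lemma sum_kb: "(\<Sum>i\<in>UNIV. g i) = g E + g A + g B + g C1 + g C2 + g F + g P1 + g P2 + g Q1 + g Q2"
  for g :: "kb \<Rightarrow> 'a::comm_monoid_add"
proof -
  have UNIV_kb: "(UNIV :: kb set) = {E, A, B, C1, C2, F, P1, P2, Q1, Q2}"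
    by (auto intro: kb.exhaust)
  show ?thesis by (simp add: UNIV_kb add.assoc)
qed

lemma kmult_apply:
  "kmult x y E = x E * y E + 4 * x A * y A - 4 * x B * y B + 2 * x C1 * y C2 + 2 * x C2 * y C1
     + 2 * x P1 * y P2 - 2 * x P2 * y P1 - 2 * x Q1 * y Q2 + 2 * x Q2 * y Q1"
  "kmult x y A = x E * y A + x A * y E + x P1 * y P2 - x P2 * y P1 + x Q1 * y Q2 - x Q2 * y Q1"
  "kmult x y B = x E * y B + x B * y E + x P1 * y Q2 - x P2 * y Q1 + x Q1 * y P2 - x Q2 * y P1"
  "kmult x y C1 = x E * y C1 + x C1 * y E + 2 * x P1 * y Q1 - 2 * x Q1 * y P1"
  "kmult x y C2 = x E * y C2 + x C2 * y E - 2 * x P2 * y Q2 + 2 * x Q2 * y P2"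
  "kmult x y F = x F * y F - 6 * x P1 * y P2 + 6 * x P2 * y P1 + 6 * x Q1 * y Q2 - 6 * x Q2 * y Q1"
  "kmult x y P1 = (x E + x F) * y P1 / 2 + x P1 * (y E + y F) / 2 + x A * y P1 + x P1 * y A
     - x B * y Q1 - x Q1 * y B + x C1 * y Q2 + x Q2 * y C1"
  "kmult x y P2 = (x E + x F) * y P2 / 2 + x P2 * (y E + y F) / 2 + x A * y P2 + x P2 * y A
     - x B * y Q2 - x Q2 * y B + x C2 * y Q1 + x Q1 * y C2"
  "kmult x y Q1 = (x E + x F) * y Q1 / 2 + x Q1 * (y E + y F) / 2 - x A * y Q1 - x Q1 * y A
     + x B * y P1 + x P1 * y B + x C1 * y P2 + x P2 * y C1"
  "kmult x y Q2 = (x E + x F) * y Q2 / 2 + x Q2 * (y E + y F) / 2 - x A * y Q2 - x Q2 * y A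
     + x B * y P2 + x P2 * y B + x C2 * y P1 + x P1 * y C2"
  for x y :: "'a::field k10"
  by (simp_all add: kmult_def sum_kb bp_def algebra_simps add_divide_distrib)

lemma subalg_kzero: "is_subalg T \<Longrightarrow> kzero \<in> T"
  and subalg_kadd: "is_subalg T \<Longrightarrow> x \<in> T \<Longrightarrow> y \<in> T \<Longrightarrow> kadd x y \<in> T"
  and subalg_ksmul: "is_subalg T \<Longrightarrow> x \<in> T \<Longrightarrow> ksmul c x \<in> T"
  and subalg_kmult: "is_subalg T \<Longrightarrow> x \<in> T \<Longrightarrow> y \<in> T \<Longrightarrow> kmult x y \<in> T"
  and subalg_even_part: "is_subalg T \<Longrightarrow> x \<in> T \<Longrightarrow> even_part x \<in> T"
  and subalg_odd_part: "is_subalg T \<Longrightarrow> x \<in> T \<Longrightarrow> odd_part x \<in> T"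
  by (simp_all add: is_subalg_def)

lemma subalg_smul_mem: "is_subalg T \<Longrightarrow> x \<in> T \<Longrightarrow> z = ksmul c x \<Longrightarrow> z \<in> T"
  by (simp add: is_subalg_def)

lemma subalg_lincomb_mem:
  "is_subalg T \<Longrightarrow> x \<in> T \<Longrightarrow> y \<in> T \<Longrightarrow> z = kadd (ksmul c x) (ksmul d y) \<Longrightarrow> z \<in> T"
  by (simp add: is_subalg_def)

lemma subalg_lincomb3_mem:
  "is_subalg T \<Longrightarrow> x \<in> T \<Longrightarrow> y \<in> T \<Longrightarrow> w \<in> T \<Longrightarrow>
    z = kadd (ksmul c x) (kadd (ksmul d y) (ksmul e w)) \<Longrightarrow> z \<in> T"
  by (simp add: is_subalg_def)

lemma subalg_eq_UNIV_if_basis: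
  assumes T: "is_subalg T" and basis: "\<And>k. bv k \<in> T"
  shows "T = UNIV"
proof -
  have "(\<lambda>i. if i \<in> K then x i else 0) \<in> T" if "finite K" for K and x :: "'a k10"
    using that
  proof (induction K rule: finite_induct)
    case empty
    then show ?case using subalg_kzero[OF T] by (simp add: kzero_def)
  next
    case (insert k K)
    have "(\<lambda>i. if i \<in> insert k K then x i else 0)
        = kadd (ksmul (x k) (bv k)) (\<lambda>i. if i \<in> K then x i else 0)"
      using insert.hyps(2) by (auto simp: fun_eq_iff)
    then show ?case using insert.IH by (simp add: subalg_kadd[OF T] subalg_ksmul[OF T] basis)
  qed
  from this[of UNIV] show ?thesis by auto
qed

lemma aut_kzero: "is_aut f \<Longrightarrow> f kzero = kzero"
proof -
  assume "is_aut f"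
  then have "f (ksmul 0 kzero) = ksmul 0 (f kzero)" by (simp add: is_aut_def)
  moreover have "ksmul 0 x = kzero" for x :: "'a k10" by (simp add: fun_eq_iff)
  ultimately show ?thesis by simp
qed

lemma aut_even_part: "is_aut f \<Longrightarrow> f (even_part x) = even_part (f x)"
  and aut_odd_part: "is_aut f \<Longrightarrow> f (odd_part x) = odd_part (f x)"
proof -
  assume f: "is_aut f"
  let ?u = "f (even_part x)" and ?v = "f (odd_part x)"
  have "even_part (even_part x) = even_part x" "odd_part (odd_part x) = odd_part x"
    by (simp_all add: fun_eq_iff)
  then have u: "even_part ?u = ?u" and v: "odd_part ?v = ?v"
    using f by (simp_all add: is_aut_def)
  have "f (kadd (even_part x) (odd_part x)) = kadd ?u ?v" using f by (simp add: is_aut_def)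
  moreover have "kadd (even_part x) (odd_part x) = x" by (simp add: fun_eq_iff)
  ultimately have fx: "f x = kadd ?u ?v" by simp
  show "?u = even_part (f x)" "?v = odd_part (f x)"
  proof (rule_tac [!] ext)
    fix k
    show "?u k = even_part (f x) k" "?v k = odd_part (f x) k"
      using fun_cong[OF u, of k] fun_cong[OF v, of k] by (auto simp: fx split: if_splits)
  qed
qed

lemma is_aut_comp: "is_aut f \<Longrightarrow> is_aut g \<Longrightarrow> is_aut (g \<circ> f)"
  unfolding is_aut_def by (auto simp: bij_comp)

lemma is_aut_inv:
  assumes f: "is_aut f"
  shows "is_aut (inv f)"
proof -
  have bij: "bij f" using f by (simp add: is_aut_def)
  then have inv_f [simp]: "f (inv f x) = x" "inv f (f x) = x" for x
    by (simp_all add: bij_is_surj bij_is_inj surj_f_inv_f)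
  have inj: "f x = f y \<Longrightarrow> x = y" for x y using bij by (metis bij_is_inj injD)
  have hom: "f (kadd x y) = kadd (f x) (f y)" "f (ksmul c x) = ksmul c (f x)"
    "f (kmult x y) = kmult (f x) (f y)" for x y c
    using f by (simp_all add: is_aut_def)
  show ?thesis unfolding is_aut_def
  proof (intro conjI allI impI)
    show "bij (inv f)" using bij by (rule bij_imp_bij_inv)
    show "inv f (kadd x y) = kadd (inv f x) (inv f y)" for x y by (rule inj) (simp add: hom)
    show "inv f (ksmul c x) = ksmul c (inv f x)" for c x by (rule inj) (simp add: hom)
    show "inv f (kmult x y) = kmult (inv f x) (inv f y)" for x y by (rule inj) (simp add: hom)
    show "even_part (inv f x) = inv f x" if "even_part x = x" for x
      by (rule inj) (simp add: aut_even_part[OF f] that)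
    show "odd_part (inv f x) = inv f x" if "odd_part x = x" for x
      by (rule inj) (simp add: aut_odd_part[OF f] that)
  qed
qed

lemma is_subalg_aut_image:
  assumes f: "is_aut f" and T: "is_subalg T"
  shows "is_subalg (f ` T)"
proof -
  have hom: "f (kadd x y) = kadd (f x) (f y)" "f (ksmul c x) = ksmul c (f x)"
    "f (kmult x y) = kmult (f x) (f y)" for x y c
    using f by (simp_all add: is_aut_def)
  show ?thesis unfolding is_subalg_def
  proof (intro conjI ballI allI)
    show "kzero \<in> f ` T" using aut_kzero[OF f] subalg_kzero[OF T] by force
  next
    fix x y assume "x \<in> f ` T" "y \<in> f ` T"
    then obtain u v where uv: "u \<in> T" "v \<in> T" and "x = f u" "y = f v" by blast
    then have "kadd x y = f (kadd u v)" "kmult x y = f (kmult u v)" by (simp_all add: hom)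
    then show "kadd x y \<in> f ` T" "kmult x y \<in> f ` T"
      using subalg_kadd[OF T uv] subalg_kmult[OF T uv] by simp_all
  next
    fix c x assume "x \<in> f ` T"
    then obtain u where u: "u \<in> T" and "x = f u" by blast
    then have "ksmul c x = f (ksmul c u)" "even_part x = f (even_part u)"
      "odd_part x = f (odd_part u)"
      by (simp_all add: hom aut_even_part[OF f] aut_odd_part[OF f])
    then show "ksmul c x \<in> f ` T" "even_part x \<in> f ` T" "odd_part x \<in> f ` T"
      using subalg_ksmul[OF T u] subalg_even_part[OF T u] subalg_odd_part[OF T u] by simp_all
  qed
qed

lemma aut_image_ne_UNIV: "is_aut \<phi> \<Longrightarrow> T \<noteq> UNIV \<Longrightarrow> \<phi> ` T \<noteq> UNIV"
  unfolding is_aut_def by (metis bij_def inj_image_eq_iff)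

lemma is_autI:
  assumes "\<And>x. g (f x) = x" "\<And>x. f (g x) = x"
    and "\<And>x y. f (kadd x y) = kadd (f x) (f y)" "\<And>c x. f (ksmul c x) = ksmul c (f x)"
    and "\<And>x y. f (kmult x y) = kmult (f x) (f y)"
    and "\<And>x. x P1 = 0 \<Longrightarrow> x P2 = 0 \<Longrightarrow> x Q1 = 0 \<Longrightarrow> x Q2 = 0 \<Longrightarrow>
      f x P1 = 0 \<and> f x P2 = 0 \<and> f x Q1 = 0 \<and> f x Q2 = 0"
    and "\<And>x. x E = 0 \<Longrightarrow> x A = 0 \<Longrightarrow> x B = 0 \<Longrightarrow> x C1 = 0 \<Longrightarrow> x C2 = 0 \<Longrightarrow> x F = 0 \<Longrightarrow>
      f x E = 0 \<and> f x A = 0 \<and> f x B = 0 \<and> f x C1 = 0 \<and> f x C2 = 0 \<and> f x F = 0"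
  shows "is_aut f"
proof -
  have "even_part x = x \<longleftrightarrow> x P1 = 0 \<and> x P2 = 0 \<and> x Q1 = 0 \<and> x Q2 = 0"
    and "odd_part x = x \<longleftrightarrow> x E = 0 \<and> x A = 0 \<and> x B = 0 \<and> x C1 = 0 \<and> x C2 = 0 \<and> x F = 0"
    for x :: "'a k10"
    by (auto simp: k10_eq_iff)
  moreover have "bij f" using assms(1,2) by (metis bijI injI surjI)
  ultimately show ?thesis unfolding is_aut_def using assms(3-) by metis
qed

section \<open>Transvections\<close>

text \<open>On odd elements, \<open>upper_X t\<close> and \<open>lower_X t\<close> act on \<open>X\<close> by the elementary matrices
  with off-diagonal entry \<open>2t\<close> and fix \<open>Y\<close>, while \<open>swap_XY\<close> exchanges \<open>X\<close> and \<open>Y\<close>;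
  their components on the even part are forced by multiplicativity.\<close>

definition swap_XY :: "'a::field k10 \<Rightarrow> 'a k10" where
  "swap_XY x = kvec (x E) (x A) (- x B) (- x C1) (- x C2) (x F) (x P1) (x P2) (- x Q1) (- x Q2)"

definition upper_X :: "'a::field \<Rightarrow> 'a k10 \<Rightarrow> 'a k10" where
  "upper_X t x = kvec (x E) (x A - t * x C2) (x B - t * x C2) (x C1 + 2 * t * x A - 2 * t * x B)
     (x C2) (x F) (x P1 + t * x P2 - t * x Q2) (x P2) (x Q1 + t * x P2 - t * x Q2) (x Q2)"

definition lower_X :: "'a::field \<Rightarrow> 'a k10 \<Rightarrow> 'a k10" where
  "lower_X t x = kvec (x E) (x A + t * x C1) (x B - t * x C1) (x C1)
    (x C2 - 2 * t * x A - 2 * t * x B)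
     (x F) (x P1) (x P2 + t * x P1 + t * x Q1) (x Q1) (x Q2 - t * x P1 - t * x Q1)"

definition upper_Y :: "'a::field \<Rightarrow> 'a k10 \<Rightarrow> 'a k10" where
  "upper_Y t = swap_XY \<circ> upper_X t \<circ> swap_XY"

lemma is_aut_swap_XY: "is_aut swap_XY"
  by (rule is_autI[where g = swap_XY])
    (simp_all add: k10_eq_iff swap_XY_def kmult_apply algebra_simps
      add_divide_distrib diff_divide_distrib)

lemma is_aut_upper_X: "is_aut (upper_X t)"
  by (rule is_autI[where g = "upper_X (- t)"])
    (simp_all add: k10_eq_iff upper_X_def kmult_apply algebra_simps
      add_divide_distrib diff_divide_distrib)

lemma is_aut_lower_X: "is_aut (lower_X t)"
  by (rule is_autI[where g = "lower_X (- t)"])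
    (simp_all add: k10_eq_iff lower_X_def kmult_apply algebra_simps
      add_divide_distrib diff_divide_distrib)

lemma is_aut_upper_Y: "is_aut (upper_Y t)"
  unfolding upper_Y_def by (intro is_aut_comp is_aut_swap_XY is_aut_upper_X)

text \<open>The odd element with coordinates \<open>(x1, x2)\<close> in \<open>X\<close> and \<open>(y1, y2)\<close> in \<open>Y\<close>, with respect to
  the spanning vectors \<open>p\<^sub>1 + q\<^sub>1, p\<^sub>2 - q\<^sub>2\<close> and \<open>p\<^sub>1 - q\<^sub>1, p\<^sub>2 + q\<^sub>2\<close>.\<close>

definition odd_vec :: "'a::field \<Rightarrow> 'a \<Rightarrow> 'a \<Rightarrow> 'a \<Rightarrow> 'a k10" where
  "odd_vec x1 x2 y1 y2 = kvec 0 0 0 0 0 0 (x1 + y1) (x2 + y2) (x1 - y1) (y2 - x2)"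

lemma odd_vec_odd_coords:
  "odd_vec (x P1 + x Q1) (x P2 - x Q2) (x P1 - x Q1) (x P2 + x Q2) = ksmul 2 (odd_part x)"
  by (simp add: k10_eq_iff odd_vec_def)

lemma swap_XY_odd_vec: "swap_XY (odd_vec x1 x2 y1 y2) = odd_vec y1 y2 x1 x2"
  by (simp add: k10_eq_iff swap_XY_def odd_vec_def)

lemma upper_X_odd_vec: "upper_X t (odd_vec x1 x2 y1 y2) = odd_vec (x1 + 2 * t * x2) x2 y1 y2"
  by (simp add: k10_eq_iff upper_X_def odd_vec_def algebra_simps)

lemma lower_X_odd_vec: "lower_X t (odd_vec x1 x2 y1 y2) = odd_vec x1 (x2 + 2 * t * x1) y1 y2"
  by (simp add: k10_eq_iff lower_X_def odd_vec_def algebra_simps)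

lemma odd_vec_normalize_X:
  assumes two: "(2::'a::field) \<noteq> 0" and nz: "x1 \<noteq> 0 \<or> x2 \<noteq> (0::'a)"
  shows "\<exists>\<phi>. is_aut \<phi> \<and> \<phi> (odd_vec x1 x2 y1 y2) = odd_vec 1 0 y1 y2"
proof -
  have reduce: "\<exists>\<phi>. is_aut \<phi> \<and> \<phi> (odd_vec u1 u2 y1 y2) = odd_vec 1 0 y1 y2" if "u2 \<noteq> 0" for u1 u2
  proof (intro exI conjI)
    let ?\<phi> = "lower_X (- u2 / 2) \<circ> upper_X ((1 - u1) / (2 * u2))"
    show "is_aut ?\<phi>" by (intro is_aut_comp is_aut_upper_X is_aut_lower_X)
    show "?\<phi> (odd_vec u1 u2 y1 y2) = odd_vec 1 0 y1 y2"
      using that two by (simp add: upper_X_odd_vec lower_X_odd_vec field_simps)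
  qed
  show ?thesis
  proof (cases "x2 = 0")
    case True
    then have "x1 \<noteq> 0" using nz by simp
    then obtain \<phi> where \<phi>: "is_aut \<phi>" "\<phi> (odd_vec x1 x1 y1 y2) = odd_vec 1 0 y1 y2"
      using reduce[of x1 x1] by blast
    show ?thesis
      by (intro exI[of _ "\<phi> \<circ> lower_X (1 / 2)"])
        (use True two \<phi> in \<open>simp add: is_aut_comp is_aut_lower_X lower_X_odd_vec\<close>)
  qed (rule reduce)
qed

lemma odd_vec_normalize_Y:
  assumes two: "(2::'a::field) \<noteq> 0" and nz: "y1 \<noteq> 0 \<or> y2 \<noteq> (0::'a)"
  shows "\<exists>\<phi>. is_aut \<phi> \<and> \<phi> (odd_vec x1 x2 y1 y2) = odd_vec x1 x2 1 0"
proof -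
  obtain \<phi> where "is_aut \<phi>" "\<phi> (odd_vec y1 y2 x1 x2) = odd_vec 1 0 x1 x2"
    using odd_vec_normalize_X[OF two nz] by blast
  then show ?thesis
    by (intro exI[of _ "swap_XY \<circ> \<phi> \<circ> swap_XY"])
      (simp add: is_aut_comp is_aut_swap_XY swap_XY_odd_vec)
qed

lemma M1_eq: "M1 = {x. x P1 = 0 \<and> x P2 = 0 \<and> x Q1 = 0 \<and> x Q2 = 0}"
proof (intro equalityI subsetI)
  fix x :: "'a k10"
  assume "x \<in> M1" then show "x \<in> {x. x P1 = 0 \<and> x P2 = 0 \<and> x Q1 = 0 \<and> x Q2 = 0}"
    by (auto simp: M1_def kspan_def length_Suc_conv numeral_eq_Suc)
next
  fix x :: "'a k10"
  assume "x \<in> {x. x P1 = 0 \<and> x P2 = 0 \<and> x Q1 = 0 \<and> x Q2 = 0}" then show "x \<in> M1"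
    unfolding M1_def kspan_def
    by (intro CollectI exI[of _ "[x E, x A, x B, x C1, x C2, x F]"]) (simp add: k10_eq_iff)
qed

lemma M2_eq: "M2 = {x. x B = 0 \<and> x C1 = 0 \<and> x C2 = 0 \<and> x Q1 = 0 \<and> x Q2 = 0}"
proof (intro equalityI subsetI)
  fix x :: "'a k10"
  assume "x \<in> M2" then show "x \<in> {x. x B = 0 \<and> x C1 = 0 \<and> x C2 = 0 \<and> x Q1 = 0 \<and> x Q2 = 0}"
    by (auto simp: M2_def kspan_def length_Suc_conv numeral_eq_Suc)
next
  fix x :: "'a k10"
  assume "x \<in> {x. x B = 0 \<and> x C1 = 0 \<and> x C2 = 0 \<and> x Q1 = 0 \<and> x Q2 = 0}" then show "x \<in> M2"
    unfolding M2_def kspan_def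
    by (intro CollectI exI[of _ "[x E, x F, x A, x P1, x P2]"]) (simp add: k10_eq_iff)
qed

lemma M3_eq: "M3 = {x. x B = x A \<and> x C2 = 0 \<and> x Q2 = x P2}"
proof (intro equalityI subsetI)
  fix x :: "'a k10"
  assume "x \<in> M3" then show "x \<in> {x. x B = x A \<and> x C2 = 0 \<and> x Q2 = x P2}"
    by (auto simp: M3_def kspan_def length_Suc_conv numeral_eq_Suc)
next
  fix x :: "'a k10"
  assume "x \<in> {x. x B = x A \<and> x C2 = 0 \<and> x Q2 = x P2}" then show "x \<in> M3"
    unfolding M3_def kspan_def
    by (intro CollectI exI[of _ "[x E, x F, x A, x C1, x P1, x Q1, x P2]"]) (simp add: k10_eq_iff)
qed

lemma M4_eq: "M4 = {x. x C2 = 0 \<and> x P2 = 0 \<and> x Q2 = 0}"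
proof (intro equalityI subsetI)
  fix x :: "'a k10"
  assume "x \<in> M4" then show "x \<in> {x. x C2 = 0 \<and> x P2 = 0 \<and> x Q2 = 0}"
    by (auto simp: M4_def kspan_def length_Suc_conv numeral_eq_Suc)
next
  fix x :: "'a k10"
  assume "x \<in> {x. x C2 = 0 \<and> x P2 = 0 \<and> x Q2 = 0}" then show "x \<in> M4"
    unfolding M4_def kspan_def
    by (intro CollectI exI[of _ "[x E, x F, x A, x B, x C1, x P1, x Q1]"]) (simp add: k10_eq_iff)
qed

definition standard_subalgs :: "'a::field k10 set set" where
  "standard_subalgs = {M1, M2, M3, M4}"

lemma is_subalg_standard: "M \<in> standard_subalgs \<Longrightarrow> is_subalg M"
  unfolding standard_subalgs_def is_subalg_def
  by (auto simp: M1_eq M2_eq M3_eq M4_eq kmult_apply algebra_simps)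

lemma standard_ne_UNIV: "M \<in> standard_subalgs \<Longrightarrow> M \<noteq> UNIV"
proof
  assume "M \<in> standard_subalgs" "M = UNIV"
  then have "bv Q2 \<in> M" by simp
  with \<open>M \<in> standard_subalgs\<close> show False
    by (auto simp: standard_subalgs_def M1_eq M2_eq M3_eq M4_eq)
qed

definition below_standard :: "'a::field k10 set \<Rightarrow> bool" where
  "below_standard T \<longleftrightarrow> (\<exists>\<phi> M. is_aut \<phi> \<and> M \<in> standard_subalgs \<and> \<phi> ` T \<subseteq> M)"

lemma below_standardI: "is_aut \<phi> \<Longrightarrow> M \<in> standard_subalgs \<Longrightarrow> \<phi> ` T \<subseteq> M \<Longrightarrow> below_standard T"
  unfolding below_standard_def by blast

lemma below_standard_if_subset: "M \<in> standard_subalgs \<Longrightarrow> T \<subseteq> M \<Longrightarrow> below_standard T"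
  by (rule below_standardI[of id]) (simp_all add: is_aut_def)

lemma below_standard_aut_image: "is_aut \<psi> \<Longrightarrow> below_standard (\<psi> ` T) \<Longrightarrow> below_standard T"
  unfolding below_standard_def by (metis image_comp is_aut_comp)

section \<open>Proper subalgebras\<close>

lemma subalg_eq_UNIV_if_odd_generators:
  fixes T :: "'a::field k10 set"
  assumes T: "is_subalg T" and two: "(2::'a) \<noteq> 0" and three: "(3::'a) \<noteq> 0"
    and p1: "bv P1 \<in> T" and p2: "bv P2 \<in> T" and q1: "bv Q1 \<in> T"
  shows "T = UNIV"
proof (rule subalg_eq_UNIV_if_basis[OF T])
  have "(4::'a) = 2 * 2" "(6::'a) = 2 * 3" by simp_all
  then have four: "(4::'a) \<noteq> 0" and six: "(6::'a) \<noteq> 0"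
    using two three by (metis mult_eq_0_iff)+
  have q2: "bv Q2 \<in> T"
    by (rule subalg_smul_mem[OF T subalg_kmult[OF T subalg_kmult[OF T p2 q1] p2], of _ "-1"])
      (simp add: k10_eq_iff kmult_apply)
  have p1p2: "kmult (bv P1) (bv P2) \<in> T" and q1q2: "kmult (bv Q1) (bv Q2) \<in> T"
    using p1 p2 q1 q2 by (simp_all add: subalg_kmult[OF T])
  have a: "bv A \<in> T"
    by (rule subalg_lincomb_mem[OF T p1p2 q1q2, of _ "1/2" "1/2"])
      (simp add: k10_eq_iff kmult_apply two)
  have e: "bv E \<in> T"
    by (rule subalg_smul_mem[OF T subalg_kmult[OF T a a], of _ "1/4"])
      (simp add: k10_eq_iff kmult_apply four)
  have f: "bv F \<in> T"
    by (rule subalg_lincomb3_mem[OF T p1p2 a e, of _ "-1/6" "1/6" "1/3"])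
      (simp add: k10_eq_iff kmult_apply field_simps six three)
  have b: "bv B \<in> T"
    by (rule subalg_smul_mem[OF T subalg_kmult[OF T p1 q2], of _ 1])
      (simp add: k10_eq_iff kmult_apply)
  have c1: "bv C1 \<in> T"
    by (rule subalg_smul_mem[OF T subalg_kmult[OF T p1 q1], of _ "1/2"])
      (simp add: k10_eq_iff kmult_apply two)
  have c2: "bv C2 \<in> T"
    by (rule subalg_smul_mem[OF T subalg_kmult[OF T p2 q2], of _ "-1/2"])
      (simp add: k10_eq_iff kmult_apply two)
  show "bv k \<in> T" for k
    using p1 p2 q1 q2 a b c1 c2 e f by (cases k) simp_all
qed

lemma subset_M2I:
  fixes T :: "'a::field k10 set"
  assumes T: "is_subalg T" and q0: "\<forall>y\<in>T. y Q1 = 0 \<and> y Q2 = 0"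
    and p1: "bv P1 \<in> T" and p2: "bv P2 \<in> T"
  shows "T \<subseteq> M2"
proof
  fix y assume y: "y \<in> T"
  have "kmult (even_part y) (bv P1) \<in> T" "kmult (even_part y) (bv P2) \<in> T"
    using subalg_kmult[OF T subalg_even_part[OF T y]] p1 p2 by blast+
  then have "kmult (even_part y) (bv P1) Q1 = 0" "kmult (even_part y) (bv P1) Q2 = 0"
    "kmult (even_part y) (bv P2) Q1 = 0"
    using q0 by blast+
  then show "y \<in> M2" using q0 y by (simp add: M2_eq kmult_apply)
qed

lemma subset_M3I:
  fixes T :: "'a::field k10 set"
  assumes T: "is_subalg T" and two: "(2::'a) \<noteq> 0" and pq2: "\<forall>y\<in>T. y Q2 = y P2"
    and w: "odd_vec 0 0 1 0 \<in> T" and v: "odd_vec 0 0 0 1 \<in> T"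
  shows "T \<subseteq> M3"
proof
  fix y :: "'a k10" assume y: "y \<in> T"
  have "kmult (even_part y) (odd_vec 0 0 1 0) \<in> T" "kmult (even_part y) (odd_vec 0 0 0 1) \<in> T"
    using subalg_kmult[OF T subalg_even_part[OF T y]] w v by blast+
  then have "kmult (even_part y) (odd_vec 0 0 1 0) Q2 = kmult (even_part y) (odd_vec 0 0 1 0) P2"
    "kmult (even_part y) (odd_vec 0 0 0 1) Q2 = kmult (even_part y) (odd_vec 0 0 0 1) P2"
    using pq2 by blast+
  then have "y C2 = 0" "y B = y A" using two by (auto simp: kmult_apply odd_vec_def algebra_simps)
  then show "y \<in> M3" using pq2 y by (simp add: M3_eq)
qed

lemma subset_M4I:
  fixes T :: "'a::field k10 set"
  assumes T: "is_subalg T" and p2q2: "\<forall>y\<in>T. y P2 = 0 \<and> y Q2 = 0"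
    and s: "s \<in> T" "s P1 \<noteq> 0 \<or> s Q1 \<noteq> 0"
  shows "T \<subseteq> M4"
proof
  fix y assume y: "y \<in> T"
  have "kmult (even_part y) s \<in> T" using subalg_kmult[OF T subalg_even_part[OF T y] s(1)] .
  then have "kmult (even_part y) s P2 = 0" "kmult (even_part y) s Q2 = 0" using p2q2 by blast+
  moreover have "s P2 = 0" "s Q2 = 0" using p2q2 s(1) by simp_all
  ultimately have "y C2 * s Q1 = 0" "y C2 * s P1 = 0" by (simp_all add: kmult_apply)
  then have "y C2 = 0" using s(2) by auto
  then show "y \<in> M4" using p2q2 y by (simp add: M4_eq)
qed

lemma p2_notin_if_p1_q1:
  fixes T :: "'a::field k10 set"
  assumes T: "is_subalg T" and two: "(2::'a) \<noteq> 0" and three: "(3::'a) \<noteq> 0"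
    and proper: "T \<noteq> UNIV" and p1: "bv P1 \<in> T" and q1: "bv Q1 \<in> T"
  shows "bv P2 \<notin> T"
  using subalg_eq_UNIV_if_odd_generators[OF T two three p1 _ q1] proper by blast

lemma p2_q2_sum_or_diff_mem:
  fixes T :: "'a::field k10 set"
  assumes T: "is_subalg T" and two: "(2::'a) \<noteq> 0" and three: "(3::'a) \<noteq> 0"
    and proper: "T \<noteq> UNIV" and p1: "bv P1 \<in> T" and q1: "bv Q1 \<in> T"
    and x: "x \<in> T" "x P2 \<noteq> 0 \<or> x Q2 \<noteq> 0"
  shows "odd_vec 0 0 0 1 \<in> T \<or> odd_vec 0 1 0 0 \<in> T"
proof -
  let ?r = "kadd (ksmul (x P2) (bv P2)) (ksmul (x Q2) (bv Q2))"
  have r: "?r \<in> T"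
    by (rule subalg_lincomb3_mem[OF T subalg_odd_part[OF T x(1)] p1 q1, of _ 1 "- x P1" "- x Q1"])
      (simp add: k10_eq_iff)
  have "x P2 * x P2 = x Q2 * x Q2"
  proof (rule ccontr)
    assume ne: "x P2 * x P2 \<noteq> x Q2 * x Q2"
    \<comment> \<open>for \<open>r = u p\<^sub>2 + v q\<^sub>2\<close>: \<open>(p\<^sub>1 r) r = -(u\<^sup>2 + v\<^sup>2) p\<^sub>2 - 2uv q\<^sub>2\<close>,
      so \<open>(p\<^sub>1 r) r + 2u r = (u\<^sup>2 - v\<^sup>2) p\<^sub>2\<close>\<close>
    have "kmult (kmult (bv P1) ?r) ?r \<in> T" using subalg_kmult[OF T subalg_kmult[OF T p1 r] r] .
    then have "ksmul (x P2 * x P2 - x Q2 * x Q2) (bv P2) \<in> T"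
      by (rule subalg_lincomb_mem[OF T r, of _ _ "2 * x P2" 1])
        (simp add: k10_eq_iff kmult_apply algebra_simps)
    then have "bv P2 \<in> T"
      by (rule subalg_smul_mem[OF T, of _ _ "1 / (x P2 * x P2 - x Q2 * x Q2)"])
        (simp add: k10_eq_iff ne)
    then show False using p2_notin_if_p1_q1[OF T two three proper p1 q1] by contradiction
  qed
  then have "x P2 = x Q2 \<or> x P2 = - x Q2" by (simp add: square_eq_iff)
  moreover have "x Q2 \<noteq> 0" using x(2) \<open>x P2 * x P2 = x Q2 * x Q2\<close> by auto
  ultimately show ?thesis
    using subalg_smul_mem[OF T r, of "odd_vec 0 0 0 1" "1 / x Q2"]
      subalg_smul_mem[OF T r, of "odd_vec 0 1 0 0" "- 1 / x Q2"]
    by (auto simp: k10_eq_iff odd_vec_def)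
qed

lemma subset_M3_if_p1_q1:
  fixes T :: "'a::field k10 set"
  assumes T: "is_subalg T" and two: "(2::'a) \<noteq> 0" and three: "(3::'a) \<noteq> 0"
    and proper: "T \<noteq> UNIV" and p1: "bv P1 \<in> T" and q1: "bv Q1 \<in> T" and v: "odd_vec 0 0 0 1 \<in> T"
  shows "T \<subseteq> M3"
proof (rule subset_M3I[OF T two _ _ v])
  show "\<forall>y\<in>T. y Q2 = y P2"
  proof (rule ballI, rule ccontr)
    fix y assume y: "y \<in> T" and ne: "y Q2 \<noteq> y P2"
    have "kadd (ksmul (y P2) (bv P2)) (ksmul (y Q2) (bv Q2)) \<in> T"
      by (rule subalg_lincomb3_mem[OF T subalg_odd_part[OF T y] p1 q1, of _ 1 "- y P1" "- y Q1"])
        (simp add: k10_eq_iff)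
    then have "ksmul (y P2 - y Q2) (bv P2) \<in> T"
      by (rule subalg_lincomb_mem[OF T _ v, of _ _ 1 "- y Q2"]) (simp add: k10_eq_iff odd_vec_def)
    then have "bv P2 \<in> T"
      by (rule subalg_smul_mem[OF T, of _ _ "1 / (y P2 - y Q2)"]) (use ne in \<open>simp add: k10_eq_iff\<close>)
    then show False using p2_notin_if_p1_q1[OF T two three proper p1 q1] by contradiction
  qed
  show "odd_vec 0 0 1 0 \<in> T"
    by (rule subalg_lincomb_mem[OF T p1 q1, of _ 1 "-1"]) (simp add: k10_eq_iff odd_vec_def)
qed

lemma below_standard_if_p1_notin_q1:
  fixes T :: "'a::field k10 set"
  assumes T: "is_subalg T" and two: "(2::'a) \<noteq> 0"
    and p1: "bv P1 \<in> T" and q1: "bv Q1 \<notin> T" and x: "x \<in> T" "x P2 \<noteq> 0 \<or> x Q2 \<noteq> 0"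
  shows "below_standard T"
proof -
  have q2: "y Q2 = 0" if y: "y \<in> T" for y
  proof (rule ccontr)
    assume ne: "y Q2 \<noteq> 0"
    \<comment> \<open>\<open>(p\<^sub>1 y) p\<^sub>1 = - (y P2) p\<^sub>1 + (y Q2) q\<^sub>1\<close> for odd \<open>y\<close>\<close>
    have "kmult (kmult (bv P1) (odd_part y)) (bv P1) \<in> T"
      using subalg_kmult[OF T subalg_kmult[OF T p1 subalg_odd_part[OF T y]] p1] .
    then have "bv Q1 \<in> T"
      by (rule subalg_lincomb_mem[OF T _ p1, of _ _ "1 / y Q2" "y P2 / y Q2"])
        (simp add: k10_eq_iff kmult_apply field_simps ne)
    with q1 show False by contradiction
  qed
  have xP2: "x P2 \<noteq> 0" using x q2 by auto
  define c where "c = x Q1 / x P2"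
  have r: "kadd (bv P2) (ksmul c (bv Q1)) \<in> T"
    by (rule subalg_lincomb_mem[OF T subalg_odd_part[OF T x(1)] p1,
          of _ "1 / x P2" "- x P1 / x P2"])
      (simp add: k10_eq_iff c_def field_simps xP2 q2[OF x(1)])
  have q1c: "y Q1 = c * y P2" if y: "y \<in> T" for y
  proof (rule ccontr)
    assume ne: "y Q1 \<noteq> c * y P2"
    have "ksmul (y Q1 - c * y P2) (bv Q1) \<in> T"
      by (rule subalg_lincomb3_mem[OF T subalg_odd_part[OF T y] r p1, of _ 1 "- y P2" "- y P1"])
        (simp add: k10_eq_iff q2[OF y] algebra_simps)
    then have "bv Q1 \<in> T"
      by (rule subalg_smul_mem[OF T, of _ _ "1 / (y Q1 - c * y P2)"])
        (use ne in \<open>simp add: k10_eq_iff\<close>)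
    with q1 show False by contradiction
  qed
  \<comment> \<open>fixes \<open>p\<^sub>1\<close> and sends \<open>p\<^sub>2 + c q\<^sub>1\<close> to \<open>p\<^sub>2\<close>\<close>
  let ?\<phi> = "upper_Y (c / 2) \<circ> upper_X (- c / 2)"
  have \<phi>: "is_aut ?\<phi>" by (intro is_aut_comp is_aut_upper_X is_aut_upper_Y)
  have coords: "?\<phi> y Q1 = y Q1 - c * y P2" "?\<phi> y Q2 = y Q2" for y :: "'a k10"
    using two by (simp_all add: upper_Y_def upper_X_def swap_XY_def field_simps)
  have "?\<phi> (bv P1) = bv P1" "?\<phi> (kadd (bv P2) (ksmul c (bv Q1))) = bv P2"
    using two by (simp_all add: k10_eq_iff upper_Y_def upper_X_def swap_XY_def)
  then have "bv P1 \<in> ?\<phi> ` T" "bv P2 \<in> ?\<phi> ` T" using p1 r by (metis image_eqI)+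
  moreover have "\<forall>y\<in>?\<phi> ` T. y Q1 = 0 \<and> y Q2 = 0" using coords q1c q2 by auto
  ultimately have "?\<phi> ` T \<subseteq> M2" by (intro subset_M2I is_subalg_aut_image[OF \<phi> T])
  then show ?thesis using below_standardI[OF \<phi>, of M2] by (simp add: standard_subalgs_def)
qed

lemma below_standard_if_p1_mem:
  fixes T :: "'a::field k10 set"
  assumes T: "is_subalg T" and two: "(2::'a) \<noteq> 0" and three: "(3::'a) \<noteq> 0"
    and proper: "T \<noteq> UNIV" and p1: "bv P1 \<in> T"
  shows "below_standard T"
proof (cases "\<forall>y\<in>T. y P2 = 0 \<and> y Q2 = 0")
  case True
  then have "T \<subseteq> M4" by (rule subset_M4I[OF T _ p1]) simp
  then show ?thesis by (rule below_standard_if_subset[rotated]) (simp add: standard_subalgs_def)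
next
  case False
  then obtain x where x: "x \<in> T" "x P2 \<noteq> 0 \<or> x Q2 \<noteq> 0" by blast
  show ?thesis
  proof (cases "bv Q1 \<in> T")
    case q1: True
    from p2_q2_sum_or_diff_mem[OF T two three proper p1 q1 x] show ?thesis
    proof
      assume "odd_vec 0 0 0 1 \<in> T"
      then have "T \<subseteq> M3" by (rule subset_M3_if_p1_q1[OF T two three proper p1 q1])
      then show ?thesis by (rule below_standard_if_subset[rotated]) (simp add: standard_subalgs_def)
    next
      assume v: "odd_vec 0 1 0 0 \<in> T"
      let ?S = "swap_XY ` T"
      have S: "is_subalg ?S" by (rule is_subalg_aut_image[OF is_aut_swap_XY T])
      have "swap_XY (bv P1) = bv P1" "swap_XY (bv Q1) = ksmul (-1) (bv Q1)"
        by (simp_all add: k10_eq_iff swap_XY_def)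
      then have "bv P1 \<in> ?S" "ksmul (-1) (bv Q1) \<in> ?S" using p1 q1 by (metis image_eqI)+
      moreover have "odd_vec 0 0 0 1 \<in> ?S" using v swap_XY_odd_vec by (metis image_eqI)
      ultimately have "?S \<subseteq> M3"
        using subset_M3_if_p1_q1[OF S two three aut_image_ne_UNIV[OF is_aut_swap_XY proper]]
          subalg_smul_mem[OF S, of "ksmul (-1) (bv Q1)" "bv Q1" "-1"] by (simp add: k10_eq_iff)
      then show ?thesis using below_standardI[OF is_aut_swap_XY, of M3]
        by (simp add: standard_subalgs_def)
    qed
  next
    case False
    then show ?thesis by (rule below_standard_if_p1_notin_q1[OF T two p1 _ x])
  qed
qed

text \<open>Both the \<open>X\<close>- and the \<open>Y\<close>-component of the odd part are nonzero.\<close>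

definition mixed :: "'a::field k10 \<Rightarrow> bool" where
  "mixed x \<longleftrightarrow> (x P1 + x Q1 \<noteq> 0 \<or> x P2 - x Q2 \<noteq> 0) \<and> (x P1 - x Q1 \<noteq> 0 \<or> x P2 + x Q2 \<noteq> 0)"

lemma below_standard_if_mixed:
  fixes T :: "'a::field k10 set"
  assumes T: "is_subalg T" and two: "(2::'a) \<noteq> 0" and three: "(3::'a) \<noteq> 0"
    and proper: "T \<noteq> UNIV" and x: "x \<in> T" "mixed x"
  shows "below_standard T"
proof -
  let ?x1 = "x P1 + x Q1" and ?x2 = "x P2 - x Q2" and ?y1 = "x P1 - x Q1" and ?y2 = "x P2 + x Q2"
  have ox: "odd_vec ?x1 ?x2 ?y1 ?y2 \<in> T"
    unfolding odd_vec_odd_coords by (intro subalg_ksmul[OF T] subalg_odd_part[OF T x(1)])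
  obtain \<phi> where \<phi>: "is_aut \<phi>" "\<phi> (odd_vec ?x1 ?x2 ?y1 ?y2) = odd_vec 1 0 ?y1 ?y2"
    using odd_vec_normalize_X[OF two] x(2) unfolding mixed_def by blast
  obtain \<psi> where \<psi>: "is_aut \<psi>" "\<psi> (odd_vec 1 0 ?y1 ?y2) = odd_vec 1 0 1 0"
    using odd_vec_normalize_Y[OF two] x(2) unfolding mixed_def by blast
  let ?S = "(\<psi> \<circ> \<phi>) ` T"
  have aut: "is_aut (\<psi> \<circ> \<phi>)" by (rule is_aut_comp[OF \<phi>(1) \<psi>(1)])
  have S: "is_subalg ?S" by (rule is_subalg_aut_image[OF aut T])
  have "odd_vec 1 0 1 0 \<in> ?S" using ox \<phi>(2) \<psi>(2) by (metis comp_apply image_eqI)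
  then have "bv P1 \<in> ?S"
    by (rule subalg_smul_mem[OF S, of _ _ "1/2"]) (simp add: k10_eq_iff odd_vec_def two)
  then have "below_standard ?S"
    by (rule below_standard_if_p1_mem[OF S two three aut_image_ne_UNIV[OF aut proper]])
  then show ?thesis by (rule below_standard_aut_image[OF aut])
qed

lemma subset_M3_or_M4_if_unmixed:
  fixes T :: "'a::field k10 set"
  assumes T: "is_subalg T" and two: "(2::'a) \<noteq> 0"
    and w: "odd_vec 0 0 1 0 \<in> T" and unmixed: "\<forall>y\<in>T. \<not> mixed y"
  shows "T \<subseteq> M3 \<or> T \<subseteq> M4"
proof -
  have X0: "y P1 + y Q1 = 0 \<and> y P2 = y Q2" if y: "y \<in> T" for y
  proof (rule ccontr)
    assume X: "\<not> (y P1 + y Q1 = 0 \<and> y P2 = y Q2)"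
    then have "y P1 - y Q1 = 0" "y P2 + y Q2 = 0" using unmixed y by (auto simp: mixed_def)
    \<comment> \<open>adding \<open>w\<close> makes the \<open>Y\<close>-component nonzero and leaves the \<open>X\<close>-component unchanged\<close>
    then have "mixed (kadd y (odd_vec 0 0 1 0))"
      using X two by (auto simp: mixed_def odd_vec_def algebra_simps)
    then show False using unmixed subalg_kadd[OF T y w] by blast
  qed
  show ?thesis
  proof (cases "\<forall>y\<in>T. y P2 = 0")
    case True
    have "\<forall>y\<in>T. y P2 = 0 \<and> y Q2 = 0"
    proof
      fix y assume y: "y \<in> T"
      then have "y P2 = 0" using True by blast
      then show "y P2 = 0 \<and> y Q2 = 0" using X0[OF y] by simp
    qed
    then have "T \<subseteq> M4" by (rule subset_M4I[OF T _ w]) (simp add: odd_vec_def)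
    then show ?thesis ..
  next
    case False
    then obtain y where y: "y \<in> T" "y P2 \<noteq> 0" by blast
    have v: "odd_vec 0 0 0 1 \<in> T"
      by (rule subalg_lincomb_mem[OF T subalg_odd_part[OF T y(1)] w,
            of _ "1 / y P2" "- y P1 / y P2"])
        (use X0[OF y(1)] y(2) in \<open>auto simp: k10_eq_iff odd_vec_def field_simps\<close>)
    have "\<forall>y\<in>T. y Q2 = y P2"
    proof
      fix y assume "y \<in> T"
      from X0[OF this] show "y Q2 = y P2" by simp
    qed
    then have "T \<subseteq> M3" by (rule subset_M3I[OF T two _ w v])
    then show ?thesis ..
  qed
qed

lemma below_standard_if_pure_Y:
  fixes T :: "'a::field k10 set"
  assumes T: "is_subalg T" and two: "(2::'a) \<noteq> 0" and three: "(3::'a) \<noteq> 0"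
    and proper: "T \<noteq> UNIV" and s: "s \<in> T" and X0: "s P1 + s Q1 = 0" "s P2 - s Q2 = 0"
    and Y: "s P1 - s Q1 \<noteq> 0 \<or> s P2 + s Q2 \<noteq> 0"
  shows "below_standard T"
proof -
  have os: "odd_vec 0 0 (s P1 - s Q1) (s P2 + s Q2) \<in> T"
    using subalg_ksmul[OF T subalg_odd_part[OF T s], of 2] odd_vec_odd_coords[of s] X0 by simp
  obtain \<phi> where \<phi>: "is_aut \<phi>" "\<phi> (odd_vec 0 0 (s P1 - s Q1) (s P2 + s Q2)) = odd_vec 0 0 1 0"
    using odd_vec_normalize_Y[OF two Y] by blast
  let ?S = "\<phi> ` T"
  have S: "is_subalg ?S" by (rule is_subalg_aut_image[OF \<phi>(1) T])
  have proper_S: "?S \<noteq> UNIV" by (rule aut_image_ne_UNIV[OF \<phi>(1) proper])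
  have w: "odd_vec 0 0 1 0 \<in> ?S" using os \<phi>(2) by (metis image_eqI)
  have "below_standard ?S"
  proof (cases "\<exists>y\<in>?S. mixed y")
    case True
    then show ?thesis using below_standard_if_mixed[OF S two three proper_S] by blast
  next
    case False
    then have "?S \<subseteq> M3 \<or> ?S \<subseteq> M4" using subset_M3_or_M4_if_unmixed[OF S two w] by blast
    then show ?thesis by (auto intro: below_standard_if_subset simp: standard_subalgs_def)
  qed
  then show ?thesis by (rule below_standard_aut_image[OF \<phi>(1)])
qed

lemma below_standard_if_proper:
  fixes T :: "'a::field k10 set"
  assumes T: "is_subalg T" and two: "(2::'a) \<noteq> 0" and three: "(3::'a) \<noteq> 0"
    and proper: "T \<noteq> UNIV"
  shows "below_standard T"
proof (cases "\<forall>y\<in>T. odd_part y = kzero")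
  case True
  then have "T \<subseteq> M1" by (auto simp: M1_eq fun_eq_iff split: if_splits)
  then show ?thesis by (rule below_standard_if_subset[rotated]) (simp add: standard_subalgs_def)
next
  case False
  then obtain x where x: "x \<in> T" "odd_part x \<noteq> kzero" by blast
  have XY: "(x P1 + x Q1 \<noteq> 0 \<or> x P2 - x Q2 \<noteq> 0) \<or> (x P1 - x Q1 \<noteq> 0 \<or> x P2 + x Q2 \<noteq> 0)"
  proof (rule ccontr)
    assume "\<not> ?thesis"
    then have "x P1 + x Q1 = 0" "x P2 - x Q2 = 0" "x P1 - x Q1 = 0" "x P2 + x Q2 = 0" by blast+
    then have "ksmul 2 (odd_part x) = odd_vec 0 0 0 0" by (simp only: odd_vec_odd_coords[symmetric])
    then have "odd_part x = kzero" using two by (simp add: k10_eq_iff odd_vec_def)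
    with x(2) show False by contradiction
  qed
  consider "mixed x" | "x P1 + x Q1 = 0" "x P2 - x Q2 = 0" | "x P1 - x Q1 = 0" "x P2 + x Q2 = 0"
    unfolding mixed_def by blast
  then show ?thesis
  proof cases
    case 1
    then show ?thesis by (rule below_standard_if_mixed[OF T two three proper x(1)])
  next
    case 2
    then show ?thesis using XY by (intro below_standard_if_pure_Y[OF T two three proper x(1)]) auto
  next
    case 3
    have "below_standard (swap_XY ` T)"
      by (rule below_standard_if_pure_Y[OF is_subalg_aut_image[OF is_aut_swap_XY T] two three
            aut_image_ne_UNIV[OF is_aut_swap_XY proper] imageI[OF x(1)]])
        (use 3 XY in \<open>auto simp: swap_XY_def\<close>)
    then show ?thesis by (rule below_standard_aut_image[OF is_aut_swap_XY])
  qed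
qed

lemma maximal_subalg_eq_aut_image:
  assumes S: "is_maximal_subalg S" and \<phi>: "is_aut \<phi>" and M: "M \<in> standard_subalgs" and "\<phi> ` S \<subseteq> M"
  shows "S = inv \<phi> ` M"
proof -
  have "bij \<phi>" using \<phi> by (simp add: is_aut_def)
  then have "S \<subseteq> inv \<phi> ` M" using \<open>\<phi> ` S \<subseteq> M\<close> by (auto simp flip: bij_vimage_eq_inv_image)
  moreover have "is_subalg (inv \<phi> ` M)"
    by (rule is_subalg_aut_image[OF is_aut_inv[OF \<phi>] is_subalg_standard[OF M]])
  moreover have "inv \<phi> ` M \<noteq> UNIV"
    by (rule aut_image_ne_UNIV[OF is_aut_inv[OF \<phi>] standard_ne_UNIV[OF M]])
  ultimately show ?thesis using S unfolding is_maximal_subalg_def by blast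
qed

theorem theorem4p1:
  fixes S :: "'a::field k10 set"
  assumes "alg_closed TYPE('a)"
    and "CHAR('a) \<noteq> 2" and "CHAR('a) \<noteq> 3"
    and "is_maximal_subalg S"
  shows "\<exists>\<phi>. is_aut \<phi> \<and> (S = \<phi> ` M1 \<or> S = \<phi> ` M2 \<or> S = \<phi> ` M3 \<or> S = \<phi> ` M4)"
proof -
  have "below_standard S"
    using assms(4) two_ne_zero_if_char[OF assms(2)] three_ne_zero_if_char[OF assms(3)]
    by (intro below_standard_if_proper) (auto simp: is_maximal_subalg_def)
  then obtain \<phi> M where \<phi>: "is_aut \<phi>" and M: "M \<in> standard_subalgs" and "\<phi> ` S \<subseteq> M"
    unfolding below_standard_def by blast
  then have "S = inv \<phi> ` M" by (intro maximal_subalg_eq_aut_image[OF assms(4)])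
  then show ?thesis using is_aut_inv[OF \<phi>] M unfolding standard_subalgs_def by blast
qed

end
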